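(* Let $(M,\mathbf{p})$ be a projective manifold of dimension $n+1$ and let $\nabla\in\mathbf{p}$. (a) The differential operator $\mathcal{D}^{\mathrm{sym}}:\Gamma(TM)\to\Gamma((S^2T^*M\otimes TM)_\circ)$, $$\mathcal{D}^{\mathrm{sym}}:\xi^c\mapsto(\nabla_{(a}\nabla_{b)}\xi^c+\mathsf{P}_{(ab)}\xi^c+W_{d(a}{}^c{}_{b)}\xi^d)_\circ=\mathcal{D}^{\mathcal{A}}(\xi)_a{}^c{}_b+W_{d(a}{}^c{}_{b)}\xi^d,$$ where $(\cdot)_\circ$ denotes the totally trace-free part, is projectively invariant, i.e. independent of the choice of $\nabla\in\mathbf{p}$. (b) A vector field $\xi\in\Gamma(TM)$ is a projective symmetry of $\mathbf{p}$ if and only if $\mathcal{D}^{\mathrm{sym}}(\xi)=0$. In particular, a solution $\xi$ of $\mathcal{D}^{\mathcal{A}}(\xi)=0$ is a projective symmetry if and only if $W_{d(a}{}^c{}_{b)}\xi^d=0$, and a normal solution $\xi$ of $\mathcal{D}^{\mathcal{A}}(\xi)=0$ is a projective symmetry if and only if $W_{da}{}^c{}_b\xi^d=0$.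
   Context: A projective structure $\mathbf{p}$ is a class of torsion-free connections with the same unparametrised geodesics. For $\nabla\in\mathbf{p}$: $R_{ab}{}^c{}_d\xi^d=(\nabla_a\nabla_b-\nabla_b\nabla_a)\xi^c$, $\mathrm{Ric}_{bd}=R_{cb}{}^c{}_d$, $\mathsf{P}_{ab}=\frac{1}{n(n+2)}[(n+1)\mathrm{Ric}_{ab}+\mathrm{Ric}_{ba}]$, projective Weyl tensor $W$ defined by $R_{ab}{}^c{}_d=W_{ab}{}^c{}_d+2\delta^c{}_{[a}\mathsf{P}_{b]d}-2\mathsf{P}_{[ab]}\delta^c{}_d$, projective Cotton tensor $C_{abc}=\nabla_a\mathsf{P}_{bc}-\nabla_b\mathsf{P}_{ac}$. The operator $\mathcal{D}^{\mathcal{A}}:\Gamma(TM)\to\Gamma((S^2T^*M\otimes TM)_\circ)$ is $\xi^a\mapsto\nabla_{(b}\nabla_{c)}\xi^a+\mathsf{P}_{(bc)}\xi^a-\frac{1}{n+2}[(\nabla_{(b}\nabla_{d)}\xi^d+\mathsf{P}_{(bd)}\xi^d)\delta^a{}_c+(\nabla_{(c}\nabla_{d)}\xi^d+\mathsf{P}_{(cd)}\xi^d)\delta^a{}_b]$; it is projectively invariant. A solution $\xi$ of $\mathcal{D}^{\mathcal{A}}\xi=0$ is called normal if it is the projecting part of a section of the adjoint tractor bundle (trace-free endomorphisms of the projective tractor bundle) parallel for the normal tractor connection; equivalently, if additionally $W_{ab}{}^c{}_d\xi^d=0$ and $C_{abd}\xi^d=0$. A vector field is a projective symmetry of $\mathbf{p}$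 if its local flow preserves $\mathbf{p}$, i.e. the trace-free part of the Lie derivative $\mathcal{L}_\xi\nabla$ vanishes. *)

theory Defs
  imports "HOL-Analysis.Analysis"
begin

text \<open>Local-coordinate rendering. Points are x :: real^'n on an open set U, dim = CARD('n) = n+1.
  A connection is given by Christoffel symbols: Gam x a b c = Gamma^c_{ab},
  with nabla_a xi^c = d_a xi^c + Gamma^c_{ab} xi^b.  Tensors are functions of their indices,
  upper index listed in the position where the paper writes it.\<close>

definition kd :: "'n \<Rightarrow> 'n \<Rightarrow> real" where
  "kd i j = (if i = j then 1 else 0)"

definition pd :: "'n::finite \<Rightarrow> (real^'n \<Rightarrow> real) \<Rightarrow> real^'n \<Rightarrow> real" where
  "pd a f x = deriv (\<lambda>t. f (x + t *\<^sub>R axis a 1)) 0"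

fun pds :: "'n::finite list \<Rightarrow> (real^'n \<Rightarrow> real) \<Rightarrow> real^'n \<Rightarrow> real" where
  "pds [] f = f"
| "pds (a # as) f = pd a (pds as f)"

definition smooth_fun :: "(real^'n::finite) set \<Rightarrow> (real^'n \<Rightarrow> real) \<Rightarrow> bool" where
  "smooth_fun U f \<longleftrightarrow> (\<forall>as. continuous_on U (pds as f) \<and>
      (\<forall>x\<in>U. \<forall>a. (\<lambda>t. pds as f (x + t *\<^sub>R axis a 1)) differentiable (at 0)))"

type_synonym 'n conn = "real^'n \<Rightarrow> 'n \<Rightarrow> 'n \<Rightarrow> 'n \<Rightarrow> real"

definition torsion_free :: "(real^'n::finite) set \<Rightarrow> 'n conn \<Rightarrow> bool" where
  "torsion_free U Gam \<longleftrightarrow> (\<forall>x\<in>U. \<forall>a b c. Gam x a b c = Gam x b a c)"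

definition smooth_conn :: "(real^'n::finite) set \<Rightarrow> 'n conn \<Rightarrow> bool" where
  "smooth_conn U Gam \<longleftrightarrow> (\<forall>a b c. smooth_fun U (\<lambda>x. Gam x a b c))"

definition smooth_vf :: "(real^'n::finite) set \<Rightarrow> (real^'n \<Rightarrow> real^'n) \<Rightarrow> bool" where
  "smooth_vf U xi \<longleftrightarrow> (\<forall>c. smooth_fun U (\<lambda>x. xi x $ c))"

definition projchange :: "'n::finite conn \<Rightarrow> (real^'n \<Rightarrow> 'n \<Rightarrow> real) \<Rightarrow> 'n conn" where
  "projchange Gam Ups x a b c = Gam x a b c + kd c a * Ups x b + kd c b * Ups x a"

definition nab1 :: "'n::finite conn \<Rightarrow> (real^'n \<Rightarrow> real^'n) \<Rightarrow> real^'n \<Rightarrow> 'n \<Rightarrow> 'n \<Rightarrow> real" where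
  "nab1 Gam xi x b c = pd b (\<lambda>y. xi y $ c) x + (\<Sum>d\<in>UNIV. Gam x b d c * xi x $ d)"

definition nab2 :: "'n::finite conn \<Rightarrow> (real^'n \<Rightarrow> real^'n) \<Rightarrow> real^'n \<Rightarrow> 'n \<Rightarrow> 'n \<Rightarrow> 'n \<Rightarrow> real" where
  "nab2 Gam xi x a b c = pd a (\<lambda>y. nab1 Gam xi y b c) x
     - (\<Sum>e\<in>UNIV. Gam x a b e * nab1 Gam xi x e c)
     + (\<Sum>e\<in>UNIV. Gam x a e c * nab1 Gam xi x b e)"

text \<open>R_{ab}^c_d, so that R_{ab}^c_d xi^d = (nabla_a nabla_b - nabla_b nabla_a) xi^c\<close>
definition curv :: "'n::finite conn \<Rightarrow> real^'n \<Rightarrow> 'n \<Rightarrow> 'n \<Rightarrow> 'n \<Rightarrow> 'n \<Rightarrow> real" where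
  "curv Gam x a b c d = pd a (\<lambda>y. Gam y b d c) x - pd b (\<lambda>y. Gam y a d c) x
     + (\<Sum>e\<in>UNIV. Gam x a e c * Gam x b d e - Gam x b e c * Gam x a d e)"

definition ric :: "'n::finite conn \<Rightarrow> real^'n \<Rightarrow> 'n \<Rightarrow> 'n \<Rightarrow> real" where
  "ric Gam x b d = (\<Sum>c\<in>UNIV. curv Gam x c b c d)"

text \<open>the n of the paper: dimension = n + 1\<close>
definition nn :: "'n::finite itself \<Rightarrow> real" where
  "nn _ = real CARD('n) - 1"

definition rho :: "'n::finite conn \<Rightarrow> real^'n \<Rightarrow> 'n \<Rightarrow> 'n \<Rightarrow> real" where
  "rho Gam x a b = ((nn TYPE('n) + 1) * ric Gam x a b + ric Gam x b a)
                    / (nn TYPE('n) * (nn TYPE('n) + 2))"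

definition weyl :: "'n::finite conn \<Rightarrow> real^'n \<Rightarrow> 'n \<Rightarrow> 'n \<Rightarrow> 'n \<Rightarrow> 'n \<Rightarrow> real" where
  "weyl Gam x a b c d = curv Gam x a b c d - kd c a * rho Gam x b d + kd c b * rho Gam x a d
      + (rho Gam x a b - rho Gam x b a) * kd c d"

definition nabrho :: "'n::finite conn \<Rightarrow> real^'n \<Rightarrow> 'n \<Rightarrow> 'n \<Rightarrow> 'n \<Rightarrow> real" where
  "nabrho Gam x a b c = pd a (\<lambda>y. rho Gam y b c) x
     - (\<Sum>e\<in>UNIV. Gam x a b e * rho Gam x e c) - (\<Sum>e\<in>UNIV. Gam x a c e * rho Gam x b e)"

definition cotton :: "'n::finite conn \<Rightarrow> real^'n \<Rightarrow> 'n \<Rightarrow> 'n \<Rightarrow> 'n \<Rightarrow> real" where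
  "cotton Gam x a b c = nabrho Gam x a b c - nabrho Gam x b a c"

text \<open>trace-free part of a tensor T_{ab}^c symmetric in a b (upper index last)\<close>
definition tracefree :: "('n::finite \<Rightarrow> 'n \<Rightarrow> 'n \<Rightarrow> real) \<Rightarrow> 'n \<Rightarrow> 'n \<Rightarrow> 'n \<Rightarrow> real" where
  "tracefree T a b c = T a b c
     - (kd c a * (\<Sum>d\<in>UNIV. T b d d) + kd c b * (\<Sum>d\<in>UNIV. T a d d)) / (nn TYPE('n) + 2)"

definition Sop :: "'n::finite conn \<Rightarrow> (real^'n \<Rightarrow> real^'n) \<Rightarrow> real^'n \<Rightarrow> 'n \<Rightarrow> 'n \<Rightarrow> 'n \<Rightarrow> real" where
  "Sop Gam xi x a b c = (nab2 Gam xi x a b c + nab2 Gam xi x b a c) / 2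
      + (rho Gam x a b + rho Gam x b a) / 2 * xi x $ c"

text \<open>D^A(xi)_a^c_b, stored as (a b c)\<close>
definition DA :: "'n::finite conn \<Rightarrow> (real^'n \<Rightarrow> real^'n) \<Rightarrow> real^'n \<Rightarrow> 'n \<Rightarrow> 'n \<Rightarrow> 'n \<Rightarrow> real" where
  "DA Gam xi x a b c = Sop Gam xi x a b c
     - ((\<Sum>d\<in>UNIV. Sop Gam xi x a d d) * kd c b + (\<Sum>d\<in>UNIV. Sop Gam xi x b d d) * kd c a)
        / (nn TYPE('n) + 2)"

text \<open>W_{d(a}^c_{b)} xi^d, stored as (a b c)\<close>
definition Wsym :: "'n::finite conn \<Rightarrow> (real^'n \<Rightarrow> real^'n) \<Rightarrow> real^'n \<Rightarrow> 'n \<Rightarrow> 'n \<Rightarrow> 'n \<Rightarrow> real" where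
  "Wsym Gam xi x a b c = (\<Sum>d\<in>UNIV. (weyl Gam x d a c b + weyl Gam x d b c a) / 2 * xi x $ d)"

definition Dsym :: "'n::finite conn \<Rightarrow> (real^'n \<Rightarrow> real^'n) \<Rightarrow> real^'n \<Rightarrow> 'n \<Rightarrow> 'n \<Rightarrow> 'n \<Rightarrow> real" where
  "Dsym Gam xi x = tracefree (\<lambda>a b c. Sop Gam xi x a b c + Wsym Gam xi x a b c)"

definition lieconn :: "'n::finite conn \<Rightarrow> (real^'n \<Rightarrow> real^'n) \<Rightarrow> real^'n \<Rightarrow> 'n \<Rightarrow> 'n \<Rightarrow> 'n \<Rightarrow> real" where
  "lieconn Gam xi x a b c = pd a (\<lambda>y. pd b (\<lambda>z. xi z $ c) y) x
     + (\<Sum>e\<in>UNIV. xi x $ e * pd e (\<lambda>y. Gam y a b c) x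
                 - Gam x a b e * pd e (\<lambda>y. xi y $ c) x
                 + Gam x e b c * pd a (\<lambda>y. xi y $ e) x
                 + Gam x a e c * pd b (\<lambda>y. xi y $ e) x)"

definition proj_symmetry :: "(real^'n::finite) set \<Rightarrow> 'n conn \<Rightarrow> (real^'n \<Rightarrow> real^'n) \<Rightarrow> bool" where
  "proj_symmetry U Gam xi \<longleftrightarrow> (\<forall>x\<in>U. tracefree (lieconn Gam xi x) = (\<lambda>a b c. 0))"

definition normal_sol :: "(real^'n::finite) set \<Rightarrow> 'n conn \<Rightarrow> (real^'n \<Rightarrow> real^'n) \<Rightarrow> bool" where
  "normal_sol U Gam xi \<longleftrightarrow> (\<forall>x\<in>U. DA Gam xi x = (\<lambda>a b c. 0)
      \<and> (\<forall>a b c. (\<Sum>d\<in>UNIV. weyl Gam x a b c d * xi x $ d) = 0)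
      \<and> (\<forall>a b. (\<Sum>d\<in>UNIV. cotton Gam x a b d * xi x $ d) = 0))"

end

theory Submission
  imports Defs
begin

text \<open>Let L be the coordinate expression of the Lie derivative of the connection along xi.
  For torsion-free Gamma one has L_ab^c = nabla_a nabla_b xi^c + R_da^c_b xi^d, and L is
  symmetric in a b because coordinate partial derivatives commute (Schwarz). Splitting R into its
  Weyl and Schouten parts shows that L differs from nabla_(a nabla_b) xi^c + P_(ab) xi^c + W_d(a^c_b) xi^d
  by a pure trace delta^c_a u_b + delta^c_b u_a; hence the trace-free part of L is D^sym(xi). This
  gives (b), and also (a), since a projective change adds only another pure trace to L.
  As W is trace-free, D^sym = D^A + W_d(a^c_b) xi^d.\<close>

section \<open>Partial derivatives\<close>

definition has_partial :: "'n::finite \<Rightarrow> (real^'n \<Rightarrow> real) \<Rightarrow> real^'n \<Rightarrow> real \<Rightarrow> bool" where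
  "has_partial a f x F \<longleftrightarrow> ((\<lambda>t. f (x + t *\<^sub>R axis a 1)) has_real_derivative F) (at 0)"

definition partially_differentiable :: "(real^'n::finite \<Rightarrow> real) \<Rightarrow> real^'n \<Rightarrow> bool" where
  "partially_differentiable f x \<longleftrightarrow> (\<forall>a. (\<lambda>t. f (x + t *\<^sub>R axis a 1)) differentiable (at 0))"

lemma has_partial_imp_pd_eq: "has_partial a f x F \<Longrightarrow> pd a f x = F"
  unfolding has_partial_def pd_def by (rule DERIV_imp_deriv)

lemma partially_differentiable_has_partial:
  "partially_differentiable f x \<Longrightarrow> has_partial a f x (pd a f x)"
  unfolding has_partial_def pd_def partially_differentiable_def
  using DERIV_deriv_iff_real_differentiable by blast

lemma smooth_fun_partially_differentiable:
  assumes "smooth_fun U f" "x \<in> U"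
  shows "partially_differentiable f x" "partially_differentiable (pd b f) x"
  using assms unfolding smooth_fun_def partially_differentiable_def
  by (auto dest: spec[of _ "[]"] spec[of _ "[b]"])

lemma has_real_derivative_pd_along_axis:
  assumes "partially_differentiable f (y + s *\<^sub>R axis a 1)"
  shows "((\<lambda>t. f (y + t *\<^sub>R axis a 1)) has_real_derivative pd a f (y + s *\<^sub>R axis a 1)) (at s)"
proof -
  let ?g = "\<lambda>t. f (y + s *\<^sub>R axis a 1 + t *\<^sub>R axis a 1)"
  have "(?g has_real_derivative pd a f (y + s *\<^sub>R axis a 1)) (at (s + - s))"
    using partially_differentiable_has_partial[OF assms] by (simp add: has_partial_def)
  then have "((\<lambda>t. ?g (t + - s)) has_real_derivative pd a f (y + s *\<^sub>R axis a 1)) (at s)"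
    by (rule DERIV_shift[THEN iffD1])
  moreover have "(\<lambda>t. ?g (t + - s)) = (\<lambda>t. f (y + t *\<^sub>R axis a 1))"
    by (auto simp: algebra_simps)
  ultimately show ?thesis by simp
qed

lemma pd_cong_open:
  assumes "open U" "x \<in> U" "\<And>y. y \<in> U \<Longrightarrow> f y = g y"
  shows "pd a f x = pd a g x"
proof -
  obtain r where r: "r > 0" "ball x r \<subseteq> U" using assms openE by blast
  have "\<forall>\<^sub>F t in nhds 0. f (x + t *\<^sub>R axis a 1) = g (x + t *\<^sub>R axis a 1)"
    unfolding eventually_nhds_metric
  proof (intro exI[of _ r] conjI allI impI)
    fix t :: real assume "dist t 0 < r"
    then have "x + t *\<^sub>R axis a 1 \<in> ball x r" by (simp add: dist_norm norm_axis_1)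
    then show "f (x + t *\<^sub>R axis a 1) = g (x + t *\<^sub>R axis a 1)" using r assms(3) by blast
  qed (use r in auto)
  then show ?thesis unfolding pd_def by (rule deriv_cong_ev) simp
qed

lemma dist_add_two_axes:
  fixes x :: "real^'n::finite"
  shows "dist (x + s *\<^sub>R axis i 1 + t *\<^sub>R axis j 1) x \<le> \<bar>s\<bar> + \<bar>t\<bar>"
  using norm_triangle_ineq[of "s *\<^sub>R axis i 1" "t *\<^sub>R (axis j 1 :: real^'n)"]
  by (simp add: dist_norm norm_axis_1 add.assoc)

lemma second_difference_mean_value:
  assumes U: "smooth_fun U f" and r: "ball x r \<subseteq> U" and h: "0 < h" "2 * h < r"
  obtains \<sigma> \<tau> where "0 < \<sigma>" "\<sigma> < h" "0 < \<tau>" "\<tau> < h"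
    "f (x + h *\<^sub>R axis b 1 + h *\<^sub>R axis a 1) - f (x + h *\<^sub>R axis a 1) - f (x + h *\<^sub>R axis b 1) + f x
       = h\<^sup>2 * pd b (pd a f) (x + \<sigma> *\<^sub>R axis a 1 + \<tau> *\<^sub>R axis b 1)"
proof -
  let ?e1 = "axis a 1" and ?e2 = "axis b 1"
  have inU: "x + s *\<^sub>R ?e1 + t *\<^sub>R ?e2 \<in> U" if "0 \<le> s" "s \<le> h" "0 \<le> t" "t \<le> h" for s t
    using dist_add_two_axes[of x s a t b] that h r by (auto simp: dist_commute)
  note pdiff = smooth_fun_partially_differentiable[OF U]
  define \<phi> where "\<phi> s = f (x + h *\<^sub>R ?e2 + s *\<^sub>R ?e1) - f (x + s *\<^sub>R ?e1)" for s
  have "\<exists>z>0. z < h \<and> \<phi> h - \<phi> 0 = (h - 0) *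
      (pd a f (x + h *\<^sub>R ?e2 + z *\<^sub>R ?e1) - pd a f (x + z *\<^sub>R ?e1))"
    unfolding \<phi>_def
  proof (rule MVT2[OF h(1)])
    fix s assume s: "0 \<le> s" "s \<le> h"
    have "x + h *\<^sub>R ?e2 + s *\<^sub>R ?e1 \<in> U" "x + s *\<^sub>R ?e1 \<in> U"
      using inU[of s h] inU[of s 0] s h by (simp_all add: algebra_simps)
    then show "((\<lambda>s. f (x + h *\<^sub>R ?e2 + s *\<^sub>R ?e1) - f (x + s *\<^sub>R ?e1)) has_real_derivative
        pd a f (x + h *\<^sub>R ?e2 + s *\<^sub>R ?e1) - pd a f (x + s *\<^sub>R ?e1)) (at s)"
      by (intro DERIV_diff has_real_derivative_pd_along_axis pdiff)
  qed
  then obtain \<sigma> where \<sigma>: "0 < \<sigma>" "\<sigma> < h" and eq1: "\<phi> h - \<phi> 0 = h *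
      (pd a f (x + \<sigma> *\<^sub>R ?e1 + h *\<^sub>R ?e2) - pd a f (x + \<sigma> *\<^sub>R ?e1))"
    by (auto simp: algebra_simps)
  have "\<exists>z>0. z < h \<and> pd a f (x + \<sigma> *\<^sub>R ?e1 + h *\<^sub>R ?e2) - pd a f (x + \<sigma> *\<^sub>R ?e1 + 0 *\<^sub>R ?e2)
      = (h - 0) * pd b (pd a f) (x + \<sigma> *\<^sub>R ?e1 + z *\<^sub>R ?e2)"
  proof (rule MVT2[OF h(1)])
    fix t assume "0 \<le> t" "t \<le> h"
    then show "((\<lambda>t. pd a f (x + \<sigma> *\<^sub>R ?e1 + t *\<^sub>R ?e2)) has_real_derivative
        pd b (pd a f) (x + \<sigma> *\<^sub>R ?e1 + t *\<^sub>R ?e2)) (at t)"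
      using inU[of \<sigma> t] \<sigma> by (intro has_real_derivative_pd_along_axis pdiff) auto
  qed
  then obtain \<tau> where "0 < \<tau>" "\<tau> < h" and eq2: "pd a f (x + \<sigma> *\<^sub>R ?e1 + h *\<^sub>R ?e2) - pd a f (x + \<sigma> *\<^sub>R ?e1)
      = h * pd b (pd a f) (x + \<sigma> *\<^sub>R ?e1 + \<tau> *\<^sub>R ?e2)" by auto
  moreover have "f (x + h *\<^sub>R ?e2 + h *\<^sub>R ?e1) - f (x + h *\<^sub>R ?e1) - f (x + h *\<^sub>R ?e2) + f x = \<phi> h - \<phi> 0"
    unfolding \<phi>_def by simp
  ultimately show ?thesis
    using that \<sigma> eq1 by (simp add: algebra_simps power2_eq_square)
qed

text \<open>Schwarz: both mixed partials are limits of the same second difference quotient.\<close>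

lemma pd_commute:
  assumes U: "open U" "smooth_fun U f" and x: "x \<in> U"
  shows "pd a (pd b f) x = pd b (pd a f) x"
proof (rule ccontr)
  let ?A = "pd b (pd a f) x" and ?B = "pd a (pd b f) x"
  assume "?B \<noteq> ?A"
  define \<epsilon> where "\<epsilon> = \<bar>?A - ?B\<bar> / 2"
  have "\<epsilon> > 0" using \<open>?B \<noteq> ?A\<close> by (simp add: \<epsilon>_def)
  have "continuous_on U (pd b (pd a f))" "continuous_on U (pd a (pd b f))"
    using U(2) unfolding smooth_fun_def by (metis pds.simps)+
  then have "isCont (pd b (pd a f)) x" "isCont (pd a (pd b f)) x"
    using U(1) x continuous_on_eq_continuous_at by blast+
  then obtain d1 d2 where d1: "d1 > 0" "\<And>y. dist y x < d1 \<Longrightarrow> dist (pd b (pd a f) y) ?A < \<epsilon>"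
    and d2: "d2 > 0" "\<And>y. dist y x < d2 \<Longrightarrow> dist (pd a (pd b f) y) ?B < \<epsilon>"
    using \<open>\<epsilon> > 0\<close> unfolding continuous_at_eps_delta by metis
  obtain r where r: "r > 0" "ball x r \<subseteq> U" using U x openE by blast
  define h where "h = min (r/4) (min (d1/4) (d2/4))"
  have h: "0 < h" "2 * h < r" "2 * h < d1" "2 * h < d2" using r d1 d2 by (auto simp: h_def)
  obtain \<sigma> \<tau> where st: "0 < \<sigma>" "\<sigma> < h" "0 < \<tau>" "\<tau> < h" and E1:
     "f (x + h *\<^sub>R axis b 1 + h *\<^sub>R axis a 1) - f (x + h *\<^sub>R axis a 1) - f (x + h *\<^sub>R axis b 1) + f x
     = h\<^sup>2 * pd b (pd a f) (x + \<sigma> *\<^sub>R axis a 1 + \<tau> *\<^sub>R axis b 1)"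
    using second_difference_mean_value[OF U(2) r(2) h(1,2)] .
  obtain \<sigma>' \<tau>' where st': "0 < \<sigma>'" "\<sigma>' < h" "0 < \<tau>'" "\<tau>' < h" and E2:
     "f (x + h *\<^sub>R axis a 1 + h *\<^sub>R axis b 1) - f (x + h *\<^sub>R axis b 1) - f (x + h *\<^sub>R axis a 1) + f x
     = h\<^sup>2 * pd a (pd b f) (x + \<sigma>' *\<^sub>R axis b 1 + \<tau>' *\<^sub>R axis a 1)"
    using second_difference_mean_value[OF U(2) r(2) h(1,2)] .
  have "pd b (pd a f) (x + \<sigma> *\<^sub>R axis a 1 + \<tau> *\<^sub>R axis b 1)
      = pd a (pd b f) (x + \<sigma>' *\<^sub>R axis b 1 + \<tau>' *\<^sub>R axis a 1)"
    using E1 E2 h by (simp add: algebra_simps)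
  moreover have "dist (pd b (pd a f) (x + \<sigma> *\<^sub>R axis a 1 + \<tau> *\<^sub>R axis b 1)) ?A < \<epsilon>"
    using dist_add_two_axes[of x \<sigma> a \<tau> b] st h by (intro d1(2)) auto
  moreover have "dist (pd a (pd b f) (x + \<sigma>' *\<^sub>R axis b 1 + \<tau>' *\<^sub>R axis a 1)) ?B < \<epsilon>"
    using dist_add_two_axes[of x \<sigma>' b \<tau>' a] st' h by (intro d2(2)) auto
  ultimately show False
    unfolding \<epsilon>_def dist_real_def by (smt (verit) abs_triangle_ineq field_sum_of_halves)
qed

lemma kd_mult [simp]:
  "kd c d * X = (if c = d then X else 0)" "X * kd c d = (if c = d then X else 0)"
  by (auto simp: kd_def)

lemma mult_if_zero [simp]:
  "a * (if P then x else 0) = (if P then a * x else (0::real))"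
  "(if P then x else 0) * a = (if P then x * a else (0::real))"
  "(if P then x else 0) / a = (if P then x / a else (0::real))"
  by auto

lemma sum_if_const: "(\<Sum>d\<in>A. if P then f d else (0::real)) = (if P then (\<Sum>d\<in>A. f d) else 0)"
  by auto

lemma tracefree_add_pure_trace:
  "tracefree (\<lambda>a b c. T a b c + kd c a * u b + kd c b * u a) = tracefree (T :: 'n::finite \<Rightarrow> _)"
proof (intro ext)
  fix a b c :: 'n
  have "(\<Sum>d\<in>UNIV. T p d d + kd d p * u d + kd d d * u p)
      = (\<Sum>d\<in>UNIV. T p d d) + (nn TYPE('n) + 2) * u p" for p
    by (simp add: sum.distrib algebra_simps nn_def)
  moreover have "nn TYPE('n) + 2 \<noteq> 0"
    by (simp add: nn_def add_pos_nonneg)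
  ultimately show "tracefree (\<lambda>a b c. T a b c + kd c a * u b + kd c b * u a) a b c = tracefree T a b c"
    unfolding tracefree_def by (simp add: kd_def field_simps)
qed

section \<open>Curvature identities\<close>

lemma torsion_free_sym:
  assumes "open U" "x \<in> U" "torsion_free U Gam"
  shows "Gam x p q r = Gam x q p r"
    and "pd e (\<lambda>y. Gam y p q r) x = pd e (\<lambda>y. Gam y q p r) x"
  using assms unfolding torsion_free_def by (auto intro!: pd_cong_open[OF assms(1,2)])

lemma curv_antisym: "curv Gam x a b c d = - curv Gam x b a c d"
  unfolding curv_def by (simp add: sum_subtractf algebra_simps)

lemma weyl_antisym: "weyl Gam x a b c d = - weyl Gam x b a c d"
  unfolding weyl_def using curv_antisym[of Gam x a b c d] by (simp add: kd_def algebra_simps)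

lemma curv_trace:
  assumes "open U" "x \<in> U" "torsion_free U Gam"
  shows "(\<Sum>c\<in>UNIV. curv Gam x a b c c) = ric Gam x b a - ric Gam x a b"
  unfolding ric_def curv_def
  by (simp add: sum.distrib sum_subtractf torsion_free_sym[OF assms] algebra_simps)

lemma curv_bianchi:
  assumes "open U" "x \<in> U" "torsion_free U Gam"
  shows "curv Gam x d a c b + curv Gam x a b c d + curv Gam x b d c a = 0"
  unfolding curv_def
  by (simp add: sum.distrib sum_subtractf torsion_free_sym[OF assms] algebra_simps)

lemma weyl_bianchi:
  assumes "open U" "x \<in> U" "torsion_free U Gam"
  shows "weyl Gam x d a c b + weyl Gam x a b c d + weyl Gam x b d c a = 0"
  using curv_bianchi[OF assms, of d a c b] unfolding weyl_def
  by (simp del: kd_mult add: algebra_simps)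

text \<open>The dimension bound makes the denominator n(n+2) in the definition of rho nonzero.\<close>

lemma ric_eq_rho:
  assumes "CARD('n::finite) \<ge> 2"
  shows "ric Gam x a b = real CARD('n) * rho (Gam::'n conn) x a b - rho Gam x b a"
proof -
  define M where "M = real CARD('n)"
  define D where "D = (M - 1) * (M + 1)"
  have "D \<noteq> 0" using assms by (simp add: M_def D_def)
  have r: "rho Gam x p q = (M * ric Gam x p q + ric Gam x q p) / D" for p q
    unfolding rho_def nn_def M_def D_def by simp
  have "M * rho Gam x a b - rho Gam x b a
      = (M * (M * ric Gam x a b + ric Gam x b a) - (M * ric Gam x b a + ric Gam x a b)) / D"
    unfolding r by (simp add: diff_divide_distrib)
  also have "\<dots> = D * ric Gam x a b / D"
    by (simp add: D_def algebra_simps)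
  finally show ?thesis
    using \<open>D \<noteq> 0\<close> by (simp add: M_def)
qed

lemma ric_skew_eq_rho_skew:
  assumes "CARD('n::finite) \<ge> 2"
  shows "ric Gam x a b - ric Gam x b a = (real CARD('n) + 1) * (rho (Gam::'n conn) x a b - rho Gam x b a)"
  using ric_eq_rho[OF assms, of Gam x a b] ric_eq_rho[OF assms, of Gam x b a] by (simp add: algebra_simps)

lemma weyl_trace_23:
  assumes "CARD('n::finite) \<ge> 2"
  shows "(\<Sum>c\<in>UNIV. weyl (Gam::'n conn) x a c c d) = 0"
proof -
  have "(\<Sum>c\<in>UNIV. curv Gam x a c c d) = - ric Gam x a d"
    unfolding ric_def by (subst curv_antisym) (simp add: sum_negf)
  then show ?thesis unfolding weyl_def using ric_eq_rho[OF assms, of Gam x a d]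
    by (simp add: sum.distrib sum_subtractf algebra_simps)
qed

lemma weyl_trace_34:
  assumes "open U" "x \<in> U" "torsion_free U Gam" and "CARD('n::finite) \<ge> 2"
  shows "(\<Sum>c\<in>UNIV. weyl (Gam::'n conn) x a b c c) = 0"
  unfolding weyl_def using curv_trace[OF assms(1-3), of a b] ric_skew_eq_rho_skew[OF assms(4), of Gam x a b]
  by (simp add: sum.distrib sum_subtractf algebra_simps)

lemma Wsym_trace:
  assumes "open U" "x \<in> U" "torsion_free U Gam" and "CARD('n::finite) \<ge> 2"
  shows "(\<Sum>d\<in>UNIV. Wsym (Gam::'n conn) xi x p d d) = 0"
  unfolding Wsym_def
proof (subst sum.swap, rule sum.neutral, rule ballI)
  fix e
  have "(\<Sum>d\<in>UNIV. (weyl Gam x e p d d + weyl Gam x e d d p) / 2 * xi x $ e)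
     = ((\<Sum>d\<in>UNIV. weyl Gam x e p d d) + (\<Sum>d\<in>UNIV. weyl Gam x e d d p)) / 2 * xi x $ e"
    by (simp only: sum_distrib_right[symmetric] sum_divide_distrib[symmetric] sum.distrib)
  then show "(\<Sum>d\<in>UNIV. (weyl Gam x e p d d + weyl Gam x e d d p) / 2 * xi x $ e) = 0"
    using weyl_trace_23[OF assms(4)] weyl_trace_34[OF assms] by simp
qed

lemma Dsym_eq_DA_plus_Wsym:
  assumes "open U" "x \<in> U" "torsion_free U Gam" and "CARD('n::finite) \<ge> 2"
  shows "Dsym (Gam::'n conn) xi x = (\<lambda>a b c. DA Gam xi x a b c + Wsym Gam xi x a b c)"
  unfolding Dsym_def tracefree_def DA_def
  by (intro ext) (simp add: sum.distrib Wsym_trace[OF assms] del: kd_mult)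

text \<open>By the Bianchi identity, W_ab^c_d xi^d = 0 forces W_da^c_b xi^d to be symmetric in a b,
  so the symmetrisation in Wsym does nothing.\<close>

lemma Wsym_eq_weyl_contraction:
  assumes "open U" "x \<in> U" "torsion_free U Gam"
    and W: "\<And>a b c. (\<Sum>d\<in>UNIV. weyl Gam x a b c d * xi x $ d) = 0"
  shows "Wsym Gam xi x a b c = (\<Sum>d\<in>UNIV. weyl Gam x d a c b * xi x $ d)"
proof -
  have "(\<Sum>d\<in>UNIV. (weyl Gam x d a c b + weyl Gam x a b c d - weyl Gam x d b c a) * xi x $ d) = 0"
    using weyl_bianchi[OF assms(1-3), of _ a c b] weyl_antisym[of Gam x b _ c a] by simp
  then have "(\<Sum>d\<in>UNIV. weyl Gam x d b c a * xi x $ d) = (\<Sum>d\<in>UNIV. weyl Gam x d a c b * xi x $ d)"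
    using W[of a b c] by (simp add: sum.distrib sum_subtractf algebra_simps)
  then show ?thesis
    unfolding Wsym_def by (simp add: add_divide_distrib sum.distrib distrib_right sum_divide_distrib[symmetric])
qed

section \<open>The Lie derivative of the connection\<close>

lemma pd_nab1:
  assumes dG: "\<And>p q r. partially_differentiable (\<lambda>y. Gam y p q r) x"
    and xi: "smooth_vf U xi" "x \<in> U"
  shows "pd a (\<lambda>y. nab1 Gam xi y b c) x = pd a (\<lambda>y. pd b (\<lambda>z. xi z $ c) y) x
    + (\<Sum>d\<in>UNIV. pd a (\<lambda>y. Gam y b d c) x * xi x $ d + Gam x b d c * pd a (\<lambda>y. xi y $ d) x)"
proof (rule has_partial_imp_pd_eq)
  have "partially_differentiable (\<lambda>y. xi y $ d) x" "partially_differentiable (pd b (\<lambda>y. xi y $ d)) x" for d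
    using xi unfolding smooth_vf_def by (auto intro: smooth_fun_partially_differentiable)
  note D = this[THEN partially_differentiable_has_partial, unfolded has_partial_def]
    dG[THEN partially_differentiable_has_partial, unfolded has_partial_def]
  show "has_partial a (\<lambda>y. nab1 Gam xi y b c) x (pd a (\<lambda>y. pd b (\<lambda>z. xi z $ c) y) x
    + (\<Sum>d\<in>UNIV. pd a (\<lambda>y. Gam y b d c) x * xi x $ d + Gam x b d c * pd a (\<lambda>y. xi y $ d) x))"
    unfolding has_partial_def nab1_def
  proof (intro DERIV_add DERIV_sum)
    fix d
    show "((\<lambda>t. Gam (x + t *\<^sub>R axis a 1) b d c * xi (x + t *\<^sub>R axis a 1) $ d) has_real_derivative
        pd a (\<lambda>y. Gam y b d c) x * xi x $ d + Gam x b d c * pd a (\<lambda>y. xi y $ d) x) (at 0)"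
      using DERIV_mult[OF D(3) D(1)] by (simp add: algebra_simps)
  qed (rule D(2))
qed

text \<open>Torsion-freeness is what makes the terms quadratic in Gamma match on both sides.\<close>

lemma lieconn_eq_nab2_curv:
  assumes U: "open U" "x \<in> U" "torsion_free U Gam"
    and dG: "\<And>p q r. partially_differentiable (\<lambda>y. Gam y p q r) x"
    and xi: "smooth_vf U xi"
  shows "lieconn Gam xi x a b c = nab2 Gam xi x a b c + (\<Sum>d\<in>UNIV. curv Gam x d a c b * xi x $ d)"
proof -
  note tf = torsion_free_sym[OF U]
  have s1: "(\<Sum>e\<in>UNIV. \<Sum>n\<in>UNIV. xi x $ n * (Gam x e n c * Gam x a b e)) =
     (\<Sum>d\<in>UNIV. \<Sum>n\<in>UNIV. xi x $ d * (Gam x d n c * Gam x a b n))"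
    by (subst sum.swap) (simp add: tf)
  have s2: "(\<Sum>d\<in>UNIV. \<Sum>n\<in>UNIV. xi x $ d * (Gam x d b n * Gam x n a c)) =
     (\<Sum>e\<in>UNIV. \<Sum>n\<in>UNIV. xi x $ n * (Gam x e a c * Gam x n b e))"
    by (subst sum.swap) (simp add: ac_simps)
  show ?thesis
    unfolding nab2_def pd_nab1[OF dG xi U(2)] unfolding lieconn_def curv_def nab1_def
    by (simp add: sum.distrib sum_subtractf sum_distrib_left sum_distrib_right algebra_simps tf)
      (simp add: s1 s2)
qed

lemma lieconn_sym:
  assumes U: "open U" "x \<in> U" "torsion_free U Gam" and xi: "smooth_vf U xi"
  shows "lieconn Gam xi x a b c = lieconn Gam xi x b a c"
proof -
  have "pd a (pd b (\<lambda>z. xi z $ c)) x = pd b (pd a (\<lambda>z. xi z $ c)) x"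
    using xi U unfolding smooth_vf_def by (intro pd_commute) auto
  then show ?thesis
    unfolding lieconn_def by (simp add: torsion_free_sym[OF U] sum.distrib algebra_simps)
qed

text \<open>The pure-trace remainder u collects the Schouten terms of R_da^c_b xi^d that are not
  absorbed by P_(ab) xi^c.\<close>

lemma lieconn_eq_Dsym_plus_trace:
  assumes U: "open U" "x \<in> U" "torsion_free U Gam"
    and dG: "\<And>p q r. partially_differentiable (\<lambda>y. Gam y p q r) x"
    and xi: "smooth_vf U xi"
  defines "u b \<equiv> - (\<Sum>d\<in>UNIV. (2 * rho Gam x d b - rho Gam x b d) * xi x $ d) / 2"
  shows "lieconn Gam xi x a b c
    = (Sop Gam xi x a b c + Wsym Gam xi x a b c) + kd c a * u b + kd c b * u a"
proof -
  have e1: "(\<Sum>d\<in>UNIV. xi x $ d * (rho Gam x p d / 2)) = (\<Sum>n\<in>UNIV. xi x $ n * rho Gam x p n / 2)" for p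
    by simp
  have e2: "(\<Sum>d\<in>UNIV. xi x $ d * (2 * rho Gam x d p / 2)) = (\<Sum>n\<in>UNIV. xi x $ n * rho Gam x n p)" for p
    by simp
  have "lieconn Gam xi x a b c = (lieconn Gam xi x a b c + lieconn Gam xi x b a c) / 2"
    using lieconn_sym[OF U xi, of a b c] by simp
  also have "\<dots> = (Sop Gam xi x a b c + Wsym Gam xi x a b c) + kd c a * u b + kd c b * u a"
    unfolding lieconn_eq_nab2_curv[OF U dG xi] Sop_def Wsym_def weyl_def u_def
    by (simp add: sum.distrib sum_subtractf sum_divide_distrib sum_distrib_left sum_distrib_right
        algebra_simps add_divide_distrib diff_divide_distrib)
      (simp only: sum_if_const e1 e2)
  finally show ?thesis .
qed

lemma tracefree_lieconn_eq_Dsym: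
  assumes "open U" "x \<in> U" "torsion_free U Gam"
    and "\<And>p q r. partially_differentiable (\<lambda>y. Gam y p q r) x"
    and "smooth_vf U xi"
  shows "tracefree (lieconn Gam xi x) = Dsym Gam xi x"
  unfolding Dsym_def lieconn_eq_Dsym_plus_trace[OF assms, abs_def]
  by (rule tracefree_add_pure_trace)

lemma proj_symmetry_iff_Dsym_zero:
  assumes "open U" "smooth_conn U Gam" "torsion_free U Gam" "smooth_vf U xi"
  shows "proj_symmetry U Gam xi \<longleftrightarrow> (\<forall>x\<in>U. Dsym Gam xi x = (\<lambda>a b c. 0))"
proof -
  have "tracefree (lieconn Gam xi x) = Dsym Gam xi x" if "x \<in> U" for x
    using assms(2) that unfolding smooth_conn_def
    by (intro tracefree_lieconn_eq_Dsym[OF assms(1) that assms(3) _ assms(4)]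
        smooth_fun_partially_differentiable) auto
  then show ?thesis
    unfolding proj_symmetry_def by auto
qed

section \<open>Projective change\<close>

lemma pd_projchange:
  assumes "\<And>p q r. partially_differentiable (\<lambda>y. Gam y p q r) x"
    and "\<And>p. partially_differentiable (\<lambda>y. Ups y p) x"
  shows "pd e (\<lambda>y. projchange Gam Ups y a b c) x = pd e (\<lambda>y. Gam y a b c) x
     + kd c a * pd e (\<lambda>y. Ups y b) x + kd c b * pd e (\<lambda>y. Ups y a) x"
proof (rule has_partial_imp_pd_eq)
  note D = assms[THEN partially_differentiable_has_partial, unfolded has_partial_def]
  show "has_partial e (\<lambda>y. projchange Gam Ups y a b c) x (pd e (\<lambda>y. Gam y a b c) x
     + kd c a * pd e (\<lambda>y. Ups y b) x + kd c b * pd e (\<lambda>y. Ups y a) x)"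
    unfolding projchange_def has_partial_def by (intro DERIV_add DERIV_cmult D)
qed

lemma lieconn_projchange:
  assumes "\<And>p q r. partially_differentiable (\<lambda>y. Gam y p q r) x"
    and "\<And>p. partially_differentiable (\<lambda>y. Ups y p) x"
  shows "lieconn (projchange Gam Ups) xi x = (\<lambda>a b c. lieconn Gam xi x a b c
     + kd c a * (\<Sum>e\<in>UNIV. xi x $ e * pd e (\<lambda>y. Ups y b) x + Ups x e * pd b (\<lambda>y. xi y $ e) x)
     + kd c b * (\<Sum>e\<in>UNIV. xi x $ e * pd e (\<lambda>y. Ups y a) x + Ups x e * pd a (\<lambda>y. xi y $ e) x))"
  unfolding lieconn_def pd_projchange[OF assms] unfolding projchange_def
  by (intro ext) (simp add: sum.distrib sum_subtractf algebra_simps sum_distrib_left kd_def sum_if_const)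

lemma Dsym_projchange:
  assumes U: "open U" "x \<in> U" and G: "smooth_conn U Gam" "torsion_free U Gam"
    and Ups: "\<forall>a. smooth_fun U (\<lambda>y. Ups y a)" and xi: "smooth_vf U xi"
  shows "Dsym (projchange Gam Ups) xi x = Dsym Gam xi x"
proof -
  have dG: "partially_differentiable (\<lambda>y. Gam y p q r) x" for p q r
    using G(1) U(2) unfolding smooth_conn_def by (auto intro: smooth_fun_partially_differentiable)
  have dU: "partially_differentiable (\<lambda>y. Ups y p) x" for p
    using Ups U(2) by (auto intro: smooth_fun_partially_differentiable)
  have "partially_differentiable (\<lambda>y. projchange Gam Ups y p q r) x" for p q r
    using dG dU unfolding projchange_def partially_differentiable_def
    by (intro allI differentiable_add differentiable_mult differentiable_const) auto
  moreover have "torsion_free U (projchange Gam Ups)"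
    using G(2) unfolding torsion_free_def projchange_def by (simp add: algebra_simps)
  ultimately have "Dsym (projchange Gam Ups) xi x = tracefree (lieconn (projchange Gam Ups) xi x)"
    by (intro tracefree_lieconn_eq_Dsym[OF U _ _ xi, symmetric])
  also have "\<dots> = tracefree (lieconn Gam xi x)"
    unfolding lieconn_projchange[OF dG dU] by (rule tracefree_add_pure_trace)
  also have "\<dots> = Dsym Gam xi x"
    by (rule tracefree_lieconn_eq_Dsym[OF U G(2) dG xi])
  finally show ?thesis .
qed

theorem theorem4p4:
  fixes U :: "(real^'n::finite) set"
    and Gam :: "'n conn" and Ups :: "real^'n \<Rightarrow> 'n \<Rightarrow> real"
    and xi :: "real^'n \<Rightarrow> real^'n"
  assumes "CARD('n) \<ge> 2"
    and "open U"
    and "smooth_conn U Gam" and "torsion_free U Gam"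
    and "\<forall>a. smooth_fun U (\<lambda>x. Ups x a)"
    and "smooth_vf U xi"
  shows "(\<forall>x\<in>U. Dsym Gam xi x = (\<lambda>a b c. DA Gam xi x a b c + Wsym Gam xi x a b c))
    \<and> (\<forall>x\<in>U. Dsym (projchange Gam Ups) xi x = Dsym Gam xi x)
    \<and> (proj_symmetry U Gam xi \<longleftrightarrow> (\<forall>x\<in>U. Dsym Gam xi x = (\<lambda>a b c. 0)))
    \<and> ((\<forall>x\<in>U. DA Gam xi x = (\<lambda>a b c. 0)) \<longrightarrow>
        (proj_symmetry U Gam xi \<longleftrightarrow> (\<forall>x\<in>U. Wsym Gam xi x = (\<lambda>a b c. 0))))
    \<and> (normal_sol U Gam xi \<longrightarrow>
        (proj_symmetry U Gam xi \<longleftrightarrow>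
          (\<forall>x\<in>U. \<forall>a b c. (\<Sum>d\<in>UNIV. weyl Gam x d a c b * xi x $ d) = 0)))"
proof -
  have split: "\<forall>x\<in>U. Dsym Gam xi x = (\<lambda>a b c. DA Gam xi x a b c + Wsym Gam xi x a b c)"
    using Dsym_eq_DA_plus_Wsym[OF assms(2) _ assms(4,1)] by blast
  have sym: "proj_symmetry U Gam xi \<longleftrightarrow> (\<forall>x\<in>U. Dsym Gam xi x = (\<lambda>a b c. 0))"
    using proj_symmetry_iff_Dsym_zero[OF assms(2,3,4,6)] .
  have DA_zero: "(\<forall>x\<in>U. DA Gam xi x = (\<lambda>a b c. 0)) \<longrightarrow>
      (proj_symmetry U Gam xi \<longleftrightarrow> (\<forall>x\<in>U. Wsym Gam xi x = (\<lambda>a b c. 0)))"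
    using split sym by (auto simp: fun_eq_iff)
  have "normal_sol U Gam xi \<longrightarrow> (\<forall>x\<in>U. \<forall>a b c.
      Wsym Gam xi x a b c = (\<Sum>d\<in>UNIV. weyl Gam x d a c b * xi x $ d))"
    unfolding normal_sol_def using Wsym_eq_weyl_contraction[OF assms(2) _ assms(4)] by blast
  then have "normal_sol U Gam xi \<longrightarrow> (proj_symmetry U Gam xi \<longleftrightarrow>
      (\<forall>x\<in>U. \<forall>a b c. (\<Sum>d\<in>UNIV. weyl Gam x d a c b * xi x $ d) = 0))"
    using DA_zero unfolding normal_sol_def by (auto simp: fun_eq_iff)
  moreover have "\<forall>x\<in>U. Dsym (projchange Gam Ups) xi x = Dsym Gam xi x"
    using Dsym_projchange[OF assms(2) _ assms(3-6)] by blast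
  ultimately show ?thesis
    using split sym DA_zero by blast
qed

end
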